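(* Let $T$ be a trigraph in $\mathcal F$ that is either the complement of a bipartite trigraph or the complement of a line trigraph. If $T$ is favorable, then either $T$ is a graph (has no switchable pair), or $T$ has an even pair disjoint from its switchable component.
   Context: A trigraph $T$ consists of a finite set $V(T)$ and a map $\theta:\binom{V(T)}{2}\to\{-1,0,1\}$. Two distinct vertices $u,v$ are strongly adjacent if $\theta(uv)=1$, strongly antiadjacent if $\theta(uv)=-1$, and semiadjacent (a switchable pair) if $\theta(uv)=0$; they are adjacent if $\theta(uv)\in\{0,1\}$ and antiadjacent if $\theta(uv)\in\{0,-1\}$. $N(v)$ is the set of vertices adjacent to $v$. The complement $\overline T$ has vertex set $V(T)$ and adjacency function $-\theta$. For $X\subseteq V(T)$, $T|X$ is the trigraph on $X$ with $\theta$ restricted, and $T\setminus X=T|(V(T)\setminus X)$. A clique (strong clique) is a set of pairwise adjacent (strongly adjacent) vertices; a strongly stable set is a set of pairwise strongly antiadjacent vertices. $T$ is a graph if it has no switchable pair. The full realization of $T$ is the graph on $V(T)$ whose edges are the adjacent pairs. A path is a sequence of distinct vertices $p_1,\dots,p_k$ such that $p_i,p_j$ are adjacent when $|i-j|=1$ and antiadjacent when $|i-j|>1$; its length is $k-1$. A hole of length $k\ge5$ consists of vertices $h_1,\dots,h_k$ with $h_i,h_j$ adjacent if $|i-j|\in\{1,k-1\}$ and antiadjacent otherwise; an antihole is an induced subtrigraph whose complement is a hole. $T$ is Berge if it contains no hole of odd length and no antihole of odd length. An even pair of $T$ is a strongly antiadjacent pair $\{u,v\}$ such that every path from $u$ to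 $v$ in $T$ has even length. $\Sigma(T)$ is the graph on $V(T)$ whose edges are the switchable pairs of $T$; a switchable component is a connected component of $\Sigma(T)$ with at least two vertices. $\mathcal F$ is the class of Berge trigraphs $T$ such that: (1) $T$ has at most one switchable component, and it has at most two edges; (2) if the switchable component has exactly one edge $xy$, then $N(x)\cap N(y)=\emptyset$ (it is called small); (3) if it has two edges, with $v$ the vertex of degree two in $\Sigma(T)$ and $x,y$ its neighbours, then $v$ is strongly anticomplete to $V(T)\setminus\{v,x,y\}$, $x$ is strongly antiadjacent to $y$, and $N(x)\cap N(y)=\{v\}$ (it is called light). For $T\in\mathcal F$, $D$ denotes the vertex set of its switchable component ($D=\emptyset$ if $T$ has no switchable pair). A pair $\{u,v\}$ is disjoint from the switchable component if $\{u,v\}\cap D=\emptyset$. A trigraph $T\in\mathcal F$ is favorable if (1) $|V(T)|\ge5$; (2) $T$ has a strongly antiadjacent pair $\{u,v\}$ disjoint from $D$; and (3) if $D=\{x,y\}$ is small, then at least one of $V(T)\setminus(D\cup N(x))$, $V(T)\setminus(D\cup N(y))$ is not a clique. $T$ is bipartite if $V(T)$ can be partitioned into two strongly stable sets. $T$ is a line trigraph if its full realization is the line graph of a bipartite graph and every clique of size at least $3$ in $T$ is a strong clique. $T$ is the complement of a bipartite (line) trigraph if $\overline T$ is a bipartite (line) trigraph. *)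

theory Defs
  imports Main
begin

text \<open>Values of theta outside distinct pairs of V are irrelevant.\<close>

definition trigraph :: "'a set \<Rightarrow> ('a \<Rightarrow> 'a \<Rightarrow> int) \<Rightarrow> bool" where
  "trigraph V th \<longleftrightarrow> finite V \<and>
     (\<forall>u\<in>V. \<forall>v\<in>V. u \<noteq> v \<longrightarrow> th u v = th v u \<and> th u v \<in> {-1, 0, 1})"

definition compl_tg :: "('a \<Rightarrow> 'a \<Rightarrow> int) \<Rightarrow> ('a \<Rightarrow> 'a \<Rightarrow> int)" where
  "compl_tg th = (\<lambda>u v. - th u v)"

definition adj :: "('a \<Rightarrow> 'a \<Rightarrow> int) \<Rightarrow> 'a \<Rightarrow> 'a \<Rightarrow> bool" where
  "adj th u v \<longleftrightarrow> u \<noteq> v \<and> th u v \<in> {0, 1}"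

definition antiadj :: "('a \<Rightarrow> 'a \<Rightarrow> int) \<Rightarrow> 'a \<Rightarrow> 'a \<Rightarrow> bool" where
  "antiadj th u v \<longleftrightarrow> u \<noteq> v \<and> th u v \<in> {0, -1}"

definition strongly_adj :: "('a \<Rightarrow> 'a \<Rightarrow> int) \<Rightarrow> 'a \<Rightarrow> 'a \<Rightarrow> bool" where
  "strongly_adj th u v \<longleftrightarrow> u \<noteq> v \<and> th u v = 1"

definition strongly_antiadj :: "('a \<Rightarrow> 'a \<Rightarrow> int) \<Rightarrow> 'a \<Rightarrow> 'a \<Rightarrow> bool" where
  "strongly_antiadj th u v \<longleftrightarrow> u \<noteq> v \<and> th u v = -1"

definition semiadj :: "('a \<Rightarrow> 'a \<Rightarrow> int) \<Rightarrow> 'a \<Rightarrow> 'a \<Rightarrow> bool" where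
  "semiadj th u v \<longleftrightarrow> u \<noteq> v \<and> th u v = 0"

definition nbhd :: "'a set \<Rightarrow> ('a \<Rightarrow> 'a \<Rightarrow> int) \<Rightarrow> 'a \<Rightarrow> 'a set" where
  "nbhd V th v = {u \<in> V. adj th u v}"

definition is_clique :: "('a \<Rightarrow> 'a \<Rightarrow> int) \<Rightarrow> 'a set \<Rightarrow> bool" where
  "is_clique th K \<longleftrightarrow> (\<forall>u\<in>K. \<forall>v\<in>K. u \<noteq> v \<longrightarrow> adj th u v)"

definition is_strong_clique :: "('a \<Rightarrow> 'a \<Rightarrow> int) \<Rightarrow> 'a set \<Rightarrow> bool" where
  "is_strong_clique th K \<longleftrightarrow> (\<forall>u\<in>K. \<forall>v\<in>K. u \<noteq> v \<longrightarrow> strongly_adj th u v)"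

definition is_strongly_stable :: "('a \<Rightarrow> 'a \<Rightarrow> int) \<Rightarrow> 'a set \<Rightarrow> bool" where
  "is_strongly_stable th S \<longleftrightarrow> (\<forall>u\<in>S. \<forall>v\<in>S. u \<noteq> v \<longrightarrow> strongly_antiadj th u v)"

text \<open>A path p_1,...,p_k given as a nonempty list of distinct vertices;
  its length is k - 1.\<close>
definition is_path :: "'a set \<Rightarrow> ('a \<Rightarrow> 'a \<Rightarrow> int) \<Rightarrow> 'a list \<Rightarrow> bool" where
  "is_path V th ps \<longleftrightarrow> ps \<noteq> [] \<and> distinct ps \<and> set ps \<subseteq> V \<and>
     (\<forall>i j. i < j \<and> j < length ps \<longrightarrow>
        (j - i = 1 \<longrightarrow> adj th (ps ! i) (ps ! j)) \<and>
        (j - i > 1 \<longrightarrow> antiadj th (ps ! i) (ps ! j)))"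

definition is_hole :: "'a set \<Rightarrow> ('a \<Rightarrow> 'a \<Rightarrow> int) \<Rightarrow> 'a list \<Rightarrow> bool" where
  "is_hole V th hs \<longleftrightarrow> length hs \<ge> 5 \<and> distinct hs \<and> set hs \<subseteq> V \<and>
     (\<forall>i j. i < j \<and> j < length hs \<longrightarrow>
        (j - i \<in> {1, length hs - 1} \<longrightarrow> adj th (hs ! i) (hs ! j)) \<and>
        (j - i \<notin> {1, length hs - 1} \<longrightarrow> antiadj th (hs ! i) (hs ! j)))"

definition is_antihole :: "'a set \<Rightarrow> ('a \<Rightarrow> 'a \<Rightarrow> int) \<Rightarrow> 'a list \<Rightarrow> bool" where
  "is_antihole V th hs \<longleftrightarrow> is_hole V (compl_tg th) hs"

definition berge :: "'a set \<Rightarrow> ('a \<Rightarrow> 'a \<Rightarrow> int) \<Rightarrow> bool" where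
  "berge V th \<longleftrightarrow>
     \<not> (\<exists>hs. is_hole V th hs \<and> odd (length hs)) \<and>
     \<not> (\<exists>hs. is_antihole V th hs \<and> odd (length hs))"

definition even_pair :: "'a set \<Rightarrow> ('a \<Rightarrow> 'a \<Rightarrow> int) \<Rightarrow> 'a \<Rightarrow> 'a \<Rightarrow> bool" where
  "even_pair V th u v \<longleftrightarrow> u \<in> V \<and> v \<in> V \<and> strongly_antiadj th u v \<and>
     (\<forall>ps. is_path V th ps \<and> hd ps = u \<and> last ps = v \<longrightarrow> even (length ps - 1))"

definition is_graph_tg :: "'a set \<Rightarrow> ('a \<Rightarrow> 'a \<Rightarrow> int) \<Rightarrow> bool" where
  "is_graph_tg V th \<longleftrightarrow> \<not> (\<exists>u\<in>V. \<exists>v\<in>V. semiadj th u v)"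

definition switch_verts :: "'a set \<Rightarrow> ('a \<Rightarrow> 'a \<Rightarrow> int) \<Rightarrow> 'a set" where
  "switch_verts V th = {u \<in> V. \<exists>v\<in>V. semiadj th u v}"

definition switch_pairs :: "'a set \<Rightarrow> ('a \<Rightarrow> 'a \<Rightarrow> int) \<Rightarrow> 'a set set" where
  "switch_pairs V th = {{u, v} | u v. u \<in> V \<and> v \<in> V \<and> semiadj th u v}"

definition small_comp :: "'a set \<Rightarrow> ('a \<Rightarrow> 'a \<Rightarrow> int) \<Rightarrow> 'a \<Rightarrow> 'a \<Rightarrow> bool" where
  "small_comp V th x y \<longleftrightarrow> x \<in> V \<and> y \<in> V \<and> x \<noteq> y \<and>
     switch_pairs V th = {{x, y}} \<and> nbhd V th x \<inter> nbhd V th y = {}"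

definition light_comp :: "'a set \<Rightarrow> ('a \<Rightarrow> 'a \<Rightarrow> int) \<Rightarrow> 'a \<Rightarrow> 'a \<Rightarrow> 'a \<Rightarrow> bool" where
  "light_comp V th v x y \<longleftrightarrow> v \<in> V \<and> x \<in> V \<and> y \<in> V \<and> v \<noteq> x \<and> v \<noteq> y \<and> x \<noteq> y \<and>
     switch_pairs V th = {{v, x}, {v, y}} \<and>
     (\<forall>w \<in> V - {v, x, y}. strongly_antiadj th v w) \<and>
     strongly_antiadj th x y \<and>
     nbhd V th x \<inter> nbhd V th y = {v}"

text \<open>A connected component of Sigma(T) with at most two edges is
  a single edge or a path with two edges; "at most one switchable component"
  means all switchable pairs lie in that component.\<close>
definition class_F :: "'a set \<Rightarrow> ('a \<Rightarrow> 'a \<Rightarrow> int) \<Rightarrow> bool" where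
  "class_F V th \<longleftrightarrow> trigraph V th \<and> berge V th \<and>
     (switch_pairs V th = {} \<or>
      (\<exists>x y. small_comp V th x y) \<or>
      (\<exists>v x y. light_comp V th v x y))"

definition favorable :: "'a set \<Rightarrow> ('a \<Rightarrow> 'a \<Rightarrow> int) \<Rightarrow> bool" where
  "favorable V th \<longleftrightarrow> class_F V th \<and> card V \<ge> 5 \<and>
     (\<exists>u\<in>V. \<exists>v\<in>V. strongly_antiadj th u v \<and>
        u \<notin> switch_verts V th \<and> v \<notin> switch_verts V th) \<and>
     (\<forall>x y. small_comp V th x y \<longrightarrow>
        \<not> is_clique th (V - ({x, y} \<union> nbhd V th x)) \<or>
        \<not> is_clique th (V - ({x, y} \<union> nbhd V th y)))"

definition bipartite_tg :: "'a set \<Rightarrow> ('a \<Rightarrow> 'a \<Rightarrow> int) \<Rightarrow> bool" where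
  "bipartite_tg V th \<longleftrightarrow> (\<exists>A B. A \<union> B = V \<and> A \<inter> B = {} \<and>
     is_strongly_stable th A \<and> is_strongly_stable th B)"

text \<open>The full realization (adjacency relation adj on V) is the line graph of a
  (simple) bipartite graph H: vertices of T correspond injectively to edges of H,
  an edge being encoded as a pair (a, b) of a vertex a of the first side and a
  vertex b of the second side (both sides labelled by naturals); two vertices of T
  are adjacent iff the corresponding edges share an end.\<close>
definition line_graph_of_bipartite :: "'a set \<Rightarrow> ('a \<Rightarrow> 'a \<Rightarrow> bool) \<Rightarrow> bool" where
  "line_graph_of_bipartite V E \<longleftrightarrow> (\<exists>f :: 'a \<Rightarrow> nat \<times> nat. inj_on f V \<and>
     (\<forall>u\<in>V. \<forall>v\<in>V. u \<noteq> v \<longrightarrow>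
        (E u v \<longleftrightarrow> fst (f u) = fst (f v) \<or> snd (f u) = snd (f v))))"

definition line_tg :: "'a set \<Rightarrow> ('a \<Rightarrow> 'a \<Rightarrow> int) \<Rightarrow> bool" where
  "line_tg V th \<longleftrightarrow> line_graph_of_bipartite V (adj th) \<and>
     (\<forall>K\<subseteq>V. is_clique th K \<and> card K \<ge> 3 \<longrightarrow> is_strong_clique th K)"

end

theory Submission
  imports Defs
begin

text \<open>Three vertices pairwise not strongly adjacent in \<open>T\<close> form a clique of \<open>\<overline>T\<close>; this
  is impossible if \<open>\<overline>T\<close> is bipartite and forces the clique to be strong if \<open>\<overline>T\<close> is a
  line trigraph. A light switchable component is such a triple containing switchable pairs, so it
  does not occur. Let the switchable component be a small one, \<open>xy\<close>. If \<open>\<overline>T\<close> is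
  bipartite, the non-neighbours of any vertex lie in the part of \<open>\<overline>T\<close> opposite to it, a
  clique of \<open>T\<close>, contrary to favourability. If \<open>\<overline>T\<close> is a line trigraph, \<open>x\<close> and
  \<open>y\<close> are edges of the underlying bipartite graph sharing an end; every other vertex is adjacent
  in \<open>\<overline>T\<close> to exactly one of them and so shares its other end with it. This splits \<open>V\<close>
  into two cliques of \<open>\<overline>T\<close> without switchable pairs, so \<open>T\<close> is bipartite, and two
  vertices of one part outside \<open>{x, y}\<close> form an even pair since paths alternate between the
  parts.\<close>

lemma adj_compl_tg_iff: "adj (compl_tg th) u v \<longleftrightarrow> u \<noteq> v \<and> th u v \<in> {0, -1}"
  by (auto simp: adj_def compl_tg_def)

lemma strongly_adj_compl_tg_iff: "strongly_adj (compl_tg th) u v \<longleftrightarrow> u \<noteq> v \<and> th u v = -1"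
  by (auto simp: strongly_adj_def compl_tg_def)

lemma strongly_antiadj_compl_tg_iff: "strongly_antiadj (compl_tg th) u v \<longleftrightarrow> u \<noteq> v \<and> th u v = 1"
  by (auto simp: strongly_antiadj_def compl_tg_def)

lemma trigraphD:
  assumes "trigraph V th" "u \<in> V" "v \<in> V" "u \<noteq> v"
  shows "th u v = th v u" "th u v \<in> {-1, 0, 1}"
  using assms unfolding trigraph_def by blast+

lemma switch_pairs_zero:
  assumes "trigraph V th" "{a, b} \<in> switch_pairs V th" "a \<noteq> b"
  shows "th a b = 0"
proof -
  obtain u w where "{a, b} = {u, w}" "u \<in> V" "w \<in> V" "semiadj th u w"
    using assms(2) unfolding switch_pairs_def by blast
  then show ?thesis
    using trigraphD[OF assms(1)] assms(3) unfolding semiadj_def by (metis doubleton_eq_iff)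
qed

lemma semiadj_in_switch_pairs:
  "u \<in> V \<Longrightarrow> v \<in> V \<Longrightarrow> semiadj th u v \<Longrightarrow> {u, v} \<in> switch_pairs V th"
  unfolding switch_pairs_def by blast

lemma switch_verts_eq_Union_switch_pairs:
  assumes "trigraph V th"
  shows "switch_verts V th = \<Union> (switch_pairs V th)"
proof
  show "switch_verts V th \<subseteq> \<Union> (switch_pairs V th)"
    unfolding switch_verts_def switch_pairs_def by blast
  have "semiadj th v u" if "u \<in> V" "v \<in> V" "semiadj th u v" for u v
    using trigraphD[OF assms that(1,2)] that(3) unfolding semiadj_def by auto
  then show "\<Union> (switch_pairs V th) \<subseteq> switch_verts V th"
    unfolding switch_verts_def switch_pairs_def by blast
qed

subsection \<open>Triangles in complements of bipartite and line trigraphs\<close>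

lemma compl_bipartite_tg_no_triangle:
  assumes "bipartite_tg V (compl_tg th)" "u \<in> V" "v \<in> V" "w \<in> V"
    and "u \<noteq> v" "u \<noteq> w" "v \<noteq> w"
    and "th u v \<noteq> 1" "th u w \<noteq> 1" "th v w \<noteq> 1"
  shows False
proof -
  obtain A B where "A \<union> B = V"
    and "is_strongly_stable (compl_tg th) A" "is_strongly_stable (compl_tg th) B"
    using assms(1) unfolding bipartite_tg_def by blast
  then show False
    using assms(2-) unfolding is_strongly_stable_def strongly_antiadj_compl_tg_iff by blast
qed

lemma compl_line_tg_triangle_strong:
  assumes "trigraph V th" "line_tg V (compl_tg th)" "u \<in> V" "v \<in> V" "w \<in> V"
    and "u \<noteq> v" "u \<noteq> w" "v \<noteq> w"
    and "th u v \<noteq> 1" "th u w \<noteq> 1" "th v w \<noteq> 1"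
  shows "th u v = -1"
proof -
  have "is_clique (compl_tg th) {u, v, w}"
    using assms(3-) trigraphD[OF assms(1)]
    unfolding is_clique_def adj_compl_tg_iff by (smt (verit, best) empty_iff insert_iff)
  moreover have "card {u, v, w} = 3"
    using assms(6-8) by simp
  ultimately have "is_strong_clique (compl_tg th) {u, v, w}"
    using assms(2-5) unfolding line_tg_def by simp
  then show ?thesis
    using assms(6) unfolding is_strong_clique_def strongly_adj_compl_tg_iff by blast
qed

lemma light_comp_triangle:
  assumes "trigraph V th" "light_comp V th v x y"
  shows "v \<in> V" "x \<in> V" "y \<in> V" "v \<noteq> x" "v \<noteq> y" "x \<noteq> y"
    and "th v x = 0" "th v y = 0" "th x y = -1"
proof -
  show V: "v \<in> V" "x \<in> V" "y \<in> V" "v \<noteq> x" "v \<noteq> y" "x \<noteq> y"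
    using assms(2) unfolding light_comp_def by auto
  show "th v x = 0" "th v y = 0" "th x y = -1"
    using assms(2) V switch_pairs_zero[OF assms(1)]
    unfolding light_comp_def strongly_antiadj_def by auto
qed

lemma light_comp_not_compl_bipartite_or_line_tg:
  assumes "trigraph V th" "light_comp V th v x y"
  shows "\<not> (bipartite_tg V (compl_tg th) \<or> line_tg V (compl_tg th))"
proof
  note triangle = light_comp_triangle[OF assms]
  assume "bipartite_tg V (compl_tg th) \<or> line_tg V (compl_tg th)"
  then show False
  proof
    assume "bipartite_tg V (compl_tg th)"
    from compl_bipartite_tg_no_triangle[OF this triangle(1-6)] show False
      using triangle(7-9) by simp
  next
    assume "line_tg V (compl_tg th)"
    from compl_line_tg_triangle_strong[OF assms(1) this triangle(1-6)] show False
      using triangle(7-9) by simp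
  qed
qed

subsection \<open>Small switchable components\<close>

lemma compl_bipartite_tg_non_nbhd_clique:
  assumes "bipartite_tg V (compl_tg th)" "z \<in> V"
  shows "is_clique th (V - ({z} \<union> nbhd V th z))"
proof -
  obtain A B where AB: "A \<union> B = V" "A \<inter> B = {}"
    and "is_strongly_stable (compl_tg th) A" "is_strongly_stable (compl_tg th) B"
    using assms(1) unfolding bipartite_tg_def by blast
  then have strong: "\<And>a b. a \<noteq> b \<Longrightarrow> a \<in> A \<and> b \<in> A \<or> a \<in> B \<and> b \<in> B \<Longrightarrow> th a b = 1"
    unfolding is_strongly_stable_def strongly_antiadj_compl_tg_iff by blast
  have "V - ({z} \<union> nbhd V th z) \<subseteq> (if z \<in> A then B else A)"
    using AB assms(2) strong by (auto simp: nbhd_def adj_def)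
  then show ?thesis
    using strong unfolding is_clique_def adj_def by (cases "z \<in> A") (auto simp: subset_iff)
qed

lemma small_comp_not_compl_bipartite_tg:
  assumes "favorable V th" "small_comp V th x y"
  shows "\<not> bipartite_tg V (compl_tg th)"
proof
  assume bip: "bipartite_tg V (compl_tg th)"
  have "x \<in> V" "y \<in> V"
    using assms(2) unfolding small_comp_def by auto
  then have "is_clique th (V - ({x, y} \<union> nbhd V th z))" if "z \<in> {x, y}" for z
    using compl_bipartite_tg_non_nbhd_clique[OF bip, of z] that unfolding is_clique_def by blast
  then show False
    using assms unfolding favorable_def by blast
qed

lemma line_graph_of_bipartite_shared_coord:
  assumes "line_graph_of_bipartite V E" "x \<in> V" "y \<in> V" "x \<noteq> y" "E x y"
  obtains g1 g2 :: "'a \<Rightarrow> nat"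
  where "inj_on (\<lambda>w. (g1 w, g2 w)) V"
    and "\<forall>u\<in>V. \<forall>v\<in>V. u \<noteq> v \<longrightarrow> (E u v \<longleftrightarrow> g1 u = g1 v \<or> g2 u = g2 v)"
    and "g2 x = g2 y"
proof -
  obtain f :: "'a \<Rightarrow> nat \<times> nat" where inj: "inj_on f V"
    and E: "\<forall>u\<in>V. \<forall>v\<in>V. u \<noteq> v \<longrightarrow> (E u v \<longleftrightarrow> fst (f u) = fst (f v) \<or> snd (f u) = snd (f v))"
    using assms(1) unfolding line_graph_of_bipartite_def by blast
  have "fst (f x) = fst (f y) \<or> snd (f x) = snd (f y)"
    using E assms(2-5) by blast
  then show ?thesis
  proof
    assume "fst (f x) = fst (f y)"
    moreover have "inj_on (\<lambda>w. (snd (f w), fst (f w))) V"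
      using inj unfolding inj_on_def by (auto simp: prod_eq_iff)
    ultimately show ?thesis
      using that[of "\<lambda>w. snd (f w)" "\<lambda>w. fst (f w)"] E by blast
  next
    assume "snd (f x) = snd (f y)"
    then show ?thesis
      using that[of "\<lambda>w. fst (f w)" "\<lambda>w. snd (f w)"] inj E by simp
  qed
qed

lemma strongly_stable_if_compl_clique:
  assumes "\<forall>a\<in>A. \<forall>b\<in>A. a \<noteq> b \<longrightarrow> adj (compl_tg th) a b"
    and "\<forall>a\<in>A. \<forall>b\<in>A. \<not> semiadj th a b"
  shows "is_strongly_stable th A"
  using assms unfolding is_strongly_stable_def adj_compl_tg_iff semiadj_def strongly_antiadj_def
  by blast

lemma small_comp_compl_line_tg_adj_exactly_one:
  assumes tg: "trigraph V th" and line: "line_tg V (compl_tg th)" and sm: "small_comp V th x y"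
    and w: "w \<in> V - {x, y}"
  shows "adj (compl_tg th) w x \<noteq> adj (compl_tg th) w y"
proof -
  have V: "x \<in> V" "y \<in> V" "x \<noteq> y" and NN: "nbhd V th x \<inter> nbhd V th y = {}"
    using sm unfolding small_comp_def by simp_all
  have W: "w \<in> V" "x \<noteq> w" "y \<noteq> w"
    using w by auto
  note wx = trigraphD[OF tg V(1) W(1,2)] and wy = trigraphD[OF tg V(2) W(1,3)]
  have "th x y = 0"
    using switch_pairs_zero[OF tg] sm V unfolding small_comp_def by simp
  then have "\<not> (th w x \<noteq> 1 \<and> th w y \<noteq> 1)"
    using compl_line_tg_triangle_strong[OF tg line V(1,2) W(1) V(3) W(2,3)] wx wy by auto
  moreover have "th w x = -1 \<or> th w y = -1"
    using NN W wx wy by (auto simp: nbhd_def adj_def)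
  ultimately show ?thesis
    using W wx wy unfolding adj_compl_tg_iff by auto
qed

lemma small_comp_compl_line_tg_bipartite_tg:
  assumes tg: "trigraph V th" and line: "line_tg V (compl_tg th)" and sm: "small_comp V th x y"
  shows "bipartite_tg V th"
proof -
  have V: "x \<in> V" "y \<in> V" "x \<noteq> y" and sp: "switch_pairs V th = {{x, y}}"
    using sm unfolding small_comp_def by simp_all
  have semi: "{a, b} = {x, y}" if "a \<in> V" "b \<in> V" "semiadj th a b" for a b
    using semiadj_in_switch_pairs[OF that] sp by simp
  have "th x y = 0"
    using switch_pairs_zero[OF tg] sp V by simp
  then obtain g1 g2 :: "'a \<Rightarrow> nat" where inj: "inj_on (\<lambda>w. (g1 w, g2 w)) V"
    and E: "\<forall>u\<in>V. \<forall>v\<in>V. u \<noteq> v \<longrightarrow> (adj (compl_tg th) u v \<longleftrightarrow> g1 u = g1 v \<or> g2 u = g2 v)"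
    and g2: "g2 x = g2 y"
    using line_graph_of_bipartite_shared_coord[of V "adj (compl_tg th)" x y] line V
    unfolding line_tg_def adj_compl_tg_iff by auto
  have g1: "g1 x \<noteq> g1 y"
    using inj_onD[OF inj _ V(1,2)] V(3) g2 by auto
  have cover: "g1 w = g1 x \<or> g1 w = g1 y" if "w \<in> V" for w
  proof (cases "w \<in> {x, y}")
    case False
    then show ?thesis
      using small_comp_compl_line_tg_adj_exactly_one[OF tg line sm, of w] E that V g2 by auto
  qed auto
  have stable: "is_strongly_stable th {w \<in> V. g1 w = c}"
    if "\<not> {x, y} \<subseteq> {w \<in> V. g1 w = c}" for c
  proof (rule strongly_stable_if_compl_clique)
    show "\<forall>a\<in>{w \<in> V. g1 w = c}. \<forall>b\<in>{w \<in> V. g1 w = c}. a \<noteq> b \<longrightarrow> adj (compl_tg th) a b"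
      using E by auto
    show "\<forall>a\<in>{w \<in> V. g1 w = c}. \<forall>b\<in>{w \<in> V. g1 w = c}. \<not> semiadj th a b"
      using semi that by (metis (no_types, lifting) insert_subset mem_Collect_eq empty_subsetI)
  qed
  have "{w \<in> V. g1 w = g1 x} \<union> {w \<in> V. g1 w = g1 y} = V"
    using cover by auto
  moreover have "{w \<in> V. g1 w = g1 x} \<inter> {w \<in> V. g1 w = g1 y} = {}"
    using g1 by auto
  moreover have "is_strongly_stable th {w \<in> V. g1 w = g1 x}" "is_strongly_stable th {w \<in> V. g1 w = g1 y}"
    using stable g1 by auto
  ultimately show ?thesis
    unfolding bipartite_tg_def by blast
qed

subsection \<open>Even pairs in bipartite trigraphs\<close>

lemma path_nth_in_part_iff_even:
  assumes "A \<union> B = V" "is_strongly_stable th A" "is_strongly_stable th B"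
    and "is_path V th ps" "hd ps \<in> A" "i < length ps"
  shows "ps ! i \<in> A \<longleftrightarrow> even i"
  using assms(6)
proof (induction i)
  case 0
  then show ?case
    using assms(4,5) by (simp add: is_path_def hd_conv_nth)
next
  case (Suc i)
  have "adj th (ps ! i) (ps ! Suc i)"
    using assms(4) Suc.prems unfolding is_path_def by simp
  moreover have "ps ! i \<in> V" "ps ! Suc i \<in> V"
    using assms(4) Suc.prems unfolding is_path_def by (meson Suc_lessD nth_mem subsetD)+
  ultimately have "ps ! i \<in> A \<longleftrightarrow> ps ! Suc i \<notin> A"
    using assms(1-3) unfolding is_strongly_stable_def strongly_antiadj_def adj_def by auto
  then show ?case
    using Suc by simp
qed

lemma even_pair_in_part:
  assumes "A \<union> B = V" "is_strongly_stable th A" "is_strongly_stable th B"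
    and "u \<in> A" "v \<in> A" "u \<noteq> v"
  shows "even_pair V th u v"
  unfolding even_pair_def
proof (intro conjI allI impI)
  show "u \<in> V" "v \<in> V" "strongly_antiadj th u v"
    using assms unfolding is_strongly_stable_def by auto
  fix ps assume ps: "is_path V th ps \<and> hd ps = u \<and> last ps = v"
  then have "ps \<noteq> []"
    by (simp add: is_path_def)
  then have "last ps = ps ! (length ps - 1)"
    by (simp add: last_conv_nth)
  then show "even (length ps - 1)"
    using path_nth_in_part_iff_even[OF assms(1-3), of ps "length ps - 1"] ps assms(4,5) \<open>ps \<noteq> []\<close>
    by auto
qed

lemma two_distinct_elements:
  assumes "2 \<le> card S"
  obtains a b where "a \<in> S" "b \<in> S" "a \<noteq> b"
proof -
  obtain T where "T \<subseteq> S" "card T = 2"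
    using obtain_subset_with_card_n[OF assms] by blast
  then show ?thesis
    using that by (auto simp: card_2_iff)
qed

lemma bipartite_tg_even_pair_avoiding:
  assumes "finite V" "finite D" "card D + 3 \<le> card V" "bipartite_tg V th"
  shows "\<exists>u\<in>V - D. \<exists>v\<in>V - D. even_pair V th u v"
proof -
  obtain A B where AB: "A \<union> B = V" "A \<inter> B = {}"
    and stable: "is_strongly_stable th A" "is_strongly_stable th B"
    using assms(4) unfolding bipartite_tg_def by blast
  have "(A - D) \<union> (B - D) = V - D" "(A - D) \<inter> (B - D) = {}"
    using AB by auto
  moreover have "finite (A - D)" "finite (B - D)"
    using AB assms(1) by auto
  ultimately have "card (A - D) + card (B - D) = card (V - D)"
    by (metis card_Un_disjoint)
  moreover have "card V - card D \<le> card (V - D)"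
    using diff_card_le_card_Diff[OF assms(2)] .
  ultimately have "2 \<le> card (A - D) \<or> 2 \<le> card (B - D)"
    using assms(3) by linarith
  then show ?thesis
  proof
    assume "2 \<le> card (A - D)"
    then obtain u v where "u \<in> A - D" "v \<in> A - D" "u \<noteq> v"
      by (rule two_distinct_elements)
    moreover have "even_pair V th u v"
      using even_pair_in_part[OF AB(1) stable] calculation by blast
    ultimately show ?thesis
      using AB(1) by blast
  next
    assume "2 \<le> card (B - D)"
    then obtain u v where "u \<in> B - D" "v \<in> B - D" "u \<noteq> v"
      by (rule two_distinct_elements)
    moreover have "even_pair V th u v"
      using even_pair_in_part[of B A V, OF _ stable(2,1)] AB(1) calculation by blast
    ultimately show ?thesis
      using AB(1) by blast
  qed
qed

theorem proposition4p8:
  fixes V :: "'a set" and th :: "'a \<Rightarrow> 'a \<Rightarrow> int"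
  assumes "class_F V th"
    and "bipartite_tg V (compl_tg th) \<or> line_tg V (compl_tg th)"
    and "favorable V th"
  shows "is_graph_tg V th \<or>
    (\<exists>u\<in>V. \<exists>v\<in>V. even_pair V th u v \<and>
       u \<notin> switch_verts V th \<and> v \<notin> switch_verts V th)"
proof -
  have tg: "trigraph V th"
    using assms(1) by (simp add: class_F_def)
  consider (graph) "switch_pairs V th = {}" | (small) x y where "small_comp V th x y"
    | (light) v x y where "light_comp V th v x y"
    using assms(1) unfolding class_F_def by blast
  then show ?thesis
  proof cases
    case graph
    then show ?thesis
      unfolding is_graph_tg_def switch_pairs_def by blast
  next
    case (small x y)
    have "line_tg V (compl_tg th)"
      using assms(2) small_comp_not_compl_bipartite_tg[OF assms(3) small] by blast
    then have "bipartite_tg V th"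
      by (rule small_comp_compl_line_tg_bipartite_tg[OF tg _ small])
    moreover have "switch_verts V th = {x, y}" "x \<noteq> y"
      using small switch_verts_eq_Union_switch_pairs[OF tg] unfolding small_comp_def by simp_all
    then have "finite (switch_verts V th)" "card (switch_verts V th) + 3 \<le> card V"
      using assms(3) unfolding favorable_def by simp_all
    moreover have "finite V"
      using tg unfolding trigraph_def by blast
    ultimately show ?thesis
      using bipartite_tg_even_pair_avoiding[of V "switch_verts V th" th] by auto
  next
    case (light v x y)
    then show ?thesis
      using assms(2) light_comp_not_compl_bipartite_or_line_tg[OF tg] by blast
  qed
qed

end
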